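(* Let $G$ be a connected graph and $H$ an isometric subgraph of $G$ which is a Helly graph. Then: (i) for every $v\in V(G)$, $S_H(v)\neq\varnothing$; (ii) for every edge $uv\in E(G)$ and every $y\in S_H(u)$, we have $d(y,S_H(v))\le 1$.
   Context: Graphs are finite and simple; $d=d_G$ denotes distance in $G$, and $d(y,S)=\min_{s\in S}d(y,s)$. A subgraph $H$ of $G$ is isometric if $d_H(x,y)=d_G(x,y)$ for all $x,y\in V(H)$. For $u\in V(H)$, $k\ge0$, $N_H^k[u]=\{y\in V(H): d_H(u,y)\le k\}$. A graph $H$ is a Helly graph if every subfamily of $\{N_H^k[u]: u\in V(H), k\ge0\}$ whose members pairwise intersect has nonempty intersection. The wide shadow of $v\in V(G)$ on $H$ is $S_H(v)=\{y\in V(H): d(y,x)\le d(v,x)\text{ for all } x\in V(H)\}$. *)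

theory Defs
  imports Main "HOL-Library.Extended_Nat"
begin

definition simple_graph :: "'a set \<Rightarrow> ('a \<Rightarrow> 'a \<Rightarrow> bool) \<Rightarrow> bool" where
  "simple_graph V E \<longleftrightarrow> finite V \<and> (\<forall>x y. E x y \<longrightarrow> x \<in> V \<and> y \<in> V)
     \<and> (\<forall>x y. E x y \<longrightarrow> E y x) \<and> (\<forall>x. \<not> E x x)"

definition gwalk :: "'a set \<Rightarrow> ('a \<Rightarrow> 'a \<Rightarrow> bool) \<Rightarrow> 'a list \<Rightarrow> bool" where
  "gwalk V E xs \<longleftrightarrow> xs \<noteq> [] \<and> set xs \<subseteq> V \<and> (\<forall>i. Suc i < length xs \<longrightarrow> E (xs ! i) (xs ! Suc i))"

text \<open>Graph distance (infinite if no walk exists).\<close>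
definition gdist :: "'a set \<Rightarrow> ('a \<Rightarrow> 'a \<Rightarrow> bool) \<Rightarrow> 'a \<Rightarrow> 'a \<Rightarrow> enat" where
  "gdist V E x y = (INF xs \<in> {xs. gwalk V E xs \<and> hd xs = x \<and> last xs = y}. enat (length xs - 1))"

definition connected_graph :: "'a set \<Rightarrow> ('a \<Rightarrow> 'a \<Rightarrow> bool) \<Rightarrow> bool" where
  "connected_graph V E \<longleftrightarrow> (\<forall>x\<in>V. \<forall>y\<in>V. gdist V E x y < \<infinity>)"

definition subgraph :: "'a set \<Rightarrow> ('a \<Rightarrow> 'a \<Rightarrow> bool) \<Rightarrow> 'a set \<Rightarrow> ('a \<Rightarrow> 'a \<Rightarrow> bool) \<Rightarrow> bool" where
  "subgraph VH EH V E \<longleftrightarrow> simple_graph VH EH \<and> VH \<subseteq> V \<and> (\<forall>x y. EH x y \<longrightarrow> E x y)"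

definition isometric_subgraph :: "'a set \<Rightarrow> ('a \<Rightarrow> 'a \<Rightarrow> bool) \<Rightarrow> 'a set \<Rightarrow> ('a \<Rightarrow> 'a \<Rightarrow> bool) \<Rightarrow> bool" where
  "isometric_subgraph VH EH V E \<longleftrightarrow> subgraph VH EH V E \<and>
     (\<forall>x\<in>VH. \<forall>y\<in>VH. gdist VH EH x y = gdist V E x y)"

definition gball :: "'a set \<Rightarrow> ('a \<Rightarrow> 'a \<Rightarrow> bool) \<Rightarrow> 'a \<Rightarrow> nat \<Rightarrow> 'a set" where
  "gball V E u k = {y \<in> V. gdist V E u y \<le> enat k}"

definition helly_graph :: "'a set \<Rightarrow> ('a \<Rightarrow> 'a \<Rightarrow> bool) \<Rightarrow> bool" where
  "helly_graph V E \<longleftrightarrow> (\<forall>F \<subseteq> V \<times> (UNIV :: nat set).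
     (\<forall>(u,k)\<in>F. \<forall>(v,l)\<in>F. gball V E u k \<inter> gball V E v l \<noteq> {}) \<longrightarrow>
     (\<Inter>(u,k)\<in>F. gball V E u k) \<noteq> {})"

definition wide_shadow :: "'a set \<Rightarrow> ('a \<Rightarrow> 'a \<Rightarrow> bool) \<Rightarrow> 'a set \<Rightarrow> 'a \<Rightarrow> 'a set" where
  "wide_shadow V E VH v = {y \<in> VH. \<forall>x\<in>VH. gdist V E y x \<le> gdist V E v x}"

end

theory Submission
  imports Defs
begin

text \<open>
  Fix \<open>v\<close> and consider the balls \<open>N\<^sub>H\<^sup>k[x]\<close> with \<open>x \<in> V(H)\<close> and \<open>k \<ge> d(v,x)\<close>. Any two of
  them meet: \<open>d\<^sub>H(x,x') = d(x,x') \<le> d(x,v) + d(v,x') \<le> k + k'\<close>, and in a graph two balls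
  meet as soon as the distance of the centres is at most the sum of the radii (cut a
  shortest path). By the Helly property they have a common point, which is exactly a point
  of \<open>S\<^sub>H(v)\<close>. For (ii) let \<open>v\<close> be adjacent to \<open>u\<close> and \<open>y \<in> S\<^sub>H(u)\<close>; then
  \<open>d(y,x) \<le> d(u,x) \<le> 1 + d(v,x)\<close>, so the ball \<open>N\<^sub>H\<^sup>1[y]\<close> may be added to the family, and the
  common point is a point of \<open>S\<^sub>H(v)\<close> within distance 1 of \<open>y\<close>.
\<close>

lemma gwalk_Cons_Cons:
  "gwalk V E (x # y # xs) \<longleftrightarrow> x \<in> V \<and> E x y \<and> gwalk V E (y # xs)"
proof
  assume walk: "gwalk V E (x # y # xs)"
  then have steps: "E ((x # y # xs) ! i) ((x # y # xs) ! Suc i)" if "Suc i < Suc (Suc (length xs))" for i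
    using that unfolding gwalk_def by simp
  have "gwalk V E (y # xs)"
    using walk steps[of "Suc _"] unfolding gwalk_def by auto
  with walk steps[of 0] show "x \<in> V \<and> E x y \<and> gwalk V E (y # xs)"
    unfolding gwalk_def by simp
next
  assume "x \<in> V \<and> E x y \<and> gwalk V E (y # xs)"
  then show "gwalk V E (x # y # xs)"
    unfolding gwalk_def by (auto simp: less_Suc_eq_0_disj)
qed

lemma gwalk_append_tl:
  assumes "gwalk V E xs" "gwalk V E ys" "last xs = hd ys"
  shows "gwalk V E (xs @ tl ys)"
  using assms
proof (induction xs rule: induct_list012)
  case 1
  then show ?case by (simp add: gwalk_def)
next
  case (2 x)
  then show ?case by (cases ys) (simp_all add: gwalk_def)
next
  case (3 x y zs)
  then have "gwalk V E ((y # zs) @ tl ys)"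
    by (simp add: gwalk_Cons_Cons)
  with 3 show ?case
    by (simp add: gwalk_Cons_Cons)
qed

lemma gwalk_rev:
  assumes "gwalk V E xs" "symp E"
  shows "gwalk V E (rev xs)"
  unfolding gwalk_def
proof (intro conjI allI impI)
  fix i
  assume i: "Suc i < length (rev xs)"
  define j where "j = length xs - Suc (Suc i)"
  have "E (xs ! j) (xs ! Suc j)"
    using assms(1) i unfolding gwalk_def j_def by simp
  moreover have "rev xs ! i = xs ! Suc j" "rev xs ! Suc i = xs ! j"
    using i by (simp_all add: rev_nth j_def Suc_diff_Suc)
  ultimately show "E (rev xs ! i) (rev xs ! Suc i)"
    using sympD[OF assms(2)] by simp
qed (use assms(1) in \<open>auto simp: gwalk_def\<close>)

lemma gwalk_take: "gwalk V E xs \<Longrightarrow> gwalk V E (take (Suc k) xs)"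
  unfolding gwalk_def by (auto dest: in_set_takeD)

lemma gwalk_drop: "gwalk V E xs \<Longrightarrow> k < length xs \<Longrightarrow> gwalk V E (drop k xs)"
  unfolding gwalk_def by (auto dest: in_set_dropD)

lemma gdist_le_walk_length:
  "gwalk V E xs \<Longrightarrow> hd xs = x \<Longrightarrow> last xs = y \<Longrightarrow> gdist V E x y \<le> enat (length xs - 1)"
  unfolding gdist_def by (rule INF_lower) auto

lemma gdist_enat_walk:
  assumes "gdist V E x y = enat n"
  obtains xs where "gwalk V E xs" "hd xs = x" "last xs = y" "length xs = Suc n"
proof -
  let ?lengths = "(\<lambda>xs. enat (length xs - 1)) ` {xs. gwalk V E xs \<and> hd xs = x \<and> last xs = y}"
  have "?lengths \<noteq> {}"
  proof
    assume empty: "?lengths = {}"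
    have "gdist V E x y = \<infinity>"
      unfolding gdist_def by (simp only: empty Inf_empty top_enat_def)
    with assms show False
      by simp
  qed
  then obtain l where "l \<in> ?lengths"
    by blast
  then have "Inf ?lengths \<in> ?lengths"
    by (rule wellorder_InfI)
  then obtain xs where "gwalk V E xs" "hd xs = x" "last xs = y" "enat (length xs - 1) = enat n"
    using assms unfolding gdist_def by auto
  moreover from this have "length xs = Suc n"
    unfolding gwalk_def by auto
  ultimately show thesis
    using that by blast
qed

lemma gdist_commute:
  assumes "symp E"
  shows "gdist V E x y = gdist V E y x"
proof -
  have "gdist V E a b \<le> gdist V E b a" for a b
    unfolding gdist_def[of V E b a]
  proof (rule INF_greatest)
    fix xs
    assume "xs \<in> {xs. gwalk V E xs \<and> hd xs = b \<and> last xs = a}"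
    then have "gwalk V E (rev xs)" "hd (rev xs) = a" "last (rev xs) = b"
      using gwalk_rev[OF _ assms] by (auto simp: hd_rev last_rev)
    then show "gdist V E a b \<le> enat (length xs - 1)"
      using gdist_le_walk_length by fastforce
  qed
  then show ?thesis
    by (metis antisym)
qed

lemma gdist_self: "x \<in> V \<Longrightarrow> gdist V E x x = 0"
  using gdist_le_walk_length[of V E "[x]" x x] by (simp add: gwalk_def flip: zero_enat_def)

lemma gdist_edge: "E x y \<Longrightarrow> x \<in> V \<Longrightarrow> y \<in> V \<Longrightarrow> gdist V E x y \<le> 1"
  using gdist_le_walk_length[of V E "[x, y]" x y]
  by (simp add: gwalk_Cons_Cons gwalk_def enat_1 flip: One_nat_def)

lemma gdist_triangle: "gdist V E x z \<le> gdist V E x y + gdist V E y z"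
proof (cases "gdist V E x y = \<infinity> \<or> gdist V E y z = \<infinity>")
  case True
  then show ?thesis by auto
next
  case False
  then obtain a b where ab: "gdist V E x y = enat a" "gdist V E y z = enat b"
    by auto
  obtain xs where xs: "gwalk V E xs" "hd xs = x" "last xs = y" "length xs = Suc a"
    using gdist_enat_walk[OF ab(1)] .
  obtain ys where ys: "gwalk V E ys" "hd ys = y" "last ys = z" "length ys = Suc b"
    using gdist_enat_walk[OF ab(2)] .
  have "gwalk V E (xs @ tl ys)"
    using gwalk_append_tl[OF xs(1) ys(1)] xs(3) ys(2) by simp
  moreover have "hd (xs @ tl ys) = x"
    using xs(2,4) by (cases xs) auto
  moreover have "last (xs @ tl ys) = z"
    using xs(3) ys(2-4) by (cases ys) (auto simp: last_tl)
  ultimately have "gdist V E x z \<le> enat (length (xs @ tl ys) - 1)"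
    by (rule gdist_le_walk_length)
  also have "\<dots> = gdist V E x y + gdist V E y z"
    using xs(4) ys(4) ab by simp
  finally show ?thesis .
qed

lemma gdist_midpoint:
  assumes sym: "symp E" and le: "gdist V E x x' \<le> enat (a + b)"
  shows "\<exists>y\<in>V. gdist V E x y \<le> enat a \<and> gdist V E x' y \<le> enat b"
proof -
  obtain n where n: "gdist V E x x' = enat n" and "n \<le> a + b"
    using le by (cases "gdist V E x x'") auto
  obtain xs where xs: "gwalk V E xs" "hd xs = x" "last xs = x'" "length xs = Suc n"
    using gdist_enat_walk[OF n] .
  define k where "k = min a n"
  have k: "k < length xs"
    using xs(4) k_def by simp
  have "hd (take (Suc k) xs) = x" "last (take (Suc k) xs) = xs ! k"
    using xs(2) k by (cases xs, auto simp: take_Suc_conv_app_nth)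
  with gwalk_take[OF xs(1)]
  have "gdist V E x (xs ! k) \<le> enat (length (take (Suc k) xs) - 1)"
    by (rule gdist_le_walk_length)
  also have "\<dots> \<le> enat a"
    using k k_def by simp
  finally have "gdist V E x (xs ! k) \<le> enat a" .
  have "hd (drop k xs) = xs ! k" "last (drop k xs) = x'"
    using xs(3) k by (simp_all add: hd_drop_conv_nth)
  with gwalk_drop[OF xs(1) k]
  have "gdist V E (xs ! k) x' \<le> enat (length (drop k xs) - 1)"
    by (rule gdist_le_walk_length)
  also have "\<dots> \<le> enat b"
    using xs(4) k_def \<open>n \<le> a + b\<close> by simp
  finally have "gdist V E x' (xs ! k) \<le> enat b"
    by (simp only: gdist_commute[OF sym])
  moreover have "xs ! k \<in> V"
    using xs(1) k unfolding gwalk_def by (meson nth_mem subsetD)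
  ultimately show ?thesis
    using \<open>gdist V E x (xs ! k) \<le> enat a\<close> by blast
qed

lemma helly_graph_common_point:
  assumes helly: "helly_graph V E" and sym: "symp E" and "V \<noteq> {}"
    and F: "F \<subseteq> V \<times> UNIV"
    and pairwise: "\<And>x k x' l. (x, k) \<in> F \<Longrightarrow> (x', l) \<in> F \<Longrightarrow> gdist V E x x' \<le> enat (k + l)"
  shows "\<exists>s\<in>V. \<forall>(x, k)\<in>F. gdist V E x s \<le> enat k"
proof (cases "F = {}")
  case True
  then show ?thesis
    using \<open>V \<noteq> {}\<close> by blast
next
  case False
  have meet: "gball V E x k \<inter> gball V E x' l \<noteq> {}" if "(x, k) \<in> F" "(x', l) \<in> F" for x k x' l
    using gdist_midpoint[OF sym pairwise[OF that]] unfolding gball_def by blast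
  have "\<forall>(x, k)\<in>F. \<forall>(x', l)\<in>F. gball V E x k \<inter> gball V E x' l \<noteq> {}"
    by (simp add: split_beta meet)
  then obtain s where s: "\<And>x k. (x, k) \<in> F \<Longrightarrow> s \<in> gball V E x k"
    using helly[unfolded helly_graph_def, rule_format, OF F] by blast
  moreover from False obtain x k where "(x, k) \<in> F"
    by auto
  ultimately show ?thesis
    unfolding gball_def by blast
qed

lemma isometric_helly_common_point:
  assumes "isometric_subgraph VH EH V E" "VH \<noteq> {}" "helly_graph VH EH"
    and F: "F \<subseteq> VH \<times> UNIV"
    and pairwise: "\<And>x k x' l. (x, k) \<in> F \<Longrightarrow> (x', l) \<in> F \<Longrightarrow> gdist V E x x' \<le> enat (k + l)"
  shows "\<exists>s\<in>VH. \<forall>(x, k)\<in>F. gdist V E x s \<le> enat k"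
proof -
  have symH: "symp EH"
    and iso: "\<And>x y. x \<in> VH \<Longrightarrow> y \<in> VH \<Longrightarrow> gdist VH EH x y = gdist V E x y"
    using assms(1) unfolding isometric_subgraph_def subgraph_def simple_graph_def symp_def by auto
  have "\<exists>s\<in>VH. \<forall>(x, k)\<in>F. gdist VH EH x s \<le> enat k"
  proof (rule helly_graph_common_point[OF assms(3) symH assms(2) F])
    fix x k x' l
    assume xk: "(x, k) \<in> F" and x'l: "(x', l) \<in> F"
    with F have "x \<in> VH" "x' \<in> VH"
      by blast+
    with pairwise[OF xk x'l] show "gdist VH EH x x' \<le> enat (k + l)"
      by (simp add: iso)
  qed
  then obtain s where s: "s \<in> VH" and s_close: "\<And>x k. (x, k) \<in> F \<Longrightarrow> gdist VH EH x s \<le> enat k"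
    by blast
  have "gdist V E x s \<le> enat k" if "(x, k) \<in> F" for x k
  proof -
    from that F have "x \<in> VH"
      by blast
    with s s_close[OF that] show ?thesis
      by (simp add: iso)
  qed
  with s show ?thesis
    by blast
qed

text \<open>
  Radii \<open>k \<ge> d(v,x)\<close> rather than \<open>k = d(v,x)\<close>: a vertex \<open>x\<close> unreachable from \<open>v\<close> then
  contributes no ball, and \<open>S\<^sub>H(v)\<close> is exactly the set of common points of these balls.
\<close>
definition shadow_balls :: "'a set \<Rightarrow> ('a \<Rightarrow> 'a \<Rightarrow> bool) \<Rightarrow> 'a set \<Rightarrow> 'a \<Rightarrow> ('a \<times> nat) set"
  where "shadow_balls V E VH v = {(x, k). x \<in> VH \<and> gdist V E v x \<le> enat k}"

lemma shadow_balls_subset: "shadow_balls V E VH v \<subseteq> VH \<times> UNIV"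
  unfolding shadow_balls_def by blast

lemma shadow_balls_pairwise:
  assumes "symp E" "(x, k) \<in> shadow_balls V E VH v" "(x', l) \<in> shadow_balls V E VH v"
  shows "gdist V E x x' \<le> enat (k + l)"
proof -
  have "gdist V E x x' \<le> gdist V E x v + gdist V E v x'"
    by (rule gdist_triangle)
  also have "\<dots> = gdist V E v x + gdist V E v x'"
    by (simp only: gdist_commute[OF assms(1), of V x v])
  also have "\<dots> \<le> enat k + enat l"
    using assms(2,3) unfolding shadow_balls_def by (intro add_mono) auto
  finally show ?thesis
    by simp
qed

lemma common_point_in_wide_shadow:
  assumes "symp E" "s \<in> VH"
    and common: "\<And>x k. (x, k) \<in> shadow_balls V E VH v \<Longrightarrow> gdist V E x s \<le> enat k"
  shows "s \<in> wide_shadow V E VH v"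
  unfolding wide_shadow_def
proof (intro CollectI conjI ballI)
  fix x
  assume "x \<in> VH"
  show "gdist V E s x \<le> gdist V E v x"
  proof (cases "gdist V E v x")
    case (enat k)
    with \<open>x \<in> VH\<close> have "gdist V E x s \<le> enat k"
      by (intro common) (simp add: shadow_balls_def)
    with enat show ?thesis
      by (simp add: gdist_commute[OF assms(1), of V s x])
  qed simp
qed (fact assms(2))

lemma wide_shadow_nonempty:
  assumes "simple_graph V E" "isometric_subgraph VH EH V E" "VH \<noteq> {}" "helly_graph VH EH"
  shows "wide_shadow V E VH v \<noteq> {}"
proof -
  have sym: "symp E"
    using assms(1) unfolding simple_graph_def symp_def by blast
  have "\<exists>s\<in>VH. \<forall>(x, k)\<in>shadow_balls V E VH v. gdist V E x s \<le> enat k"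
    by (rule isometric_helly_common_point[OF assms(2-4) shadow_balls_subset])
      (rule shadow_balls_pairwise[OF sym])
  then obtain s where "s \<in> VH" "\<forall>(x, k)\<in>shadow_balls V E VH v. gdist V E x s \<le> enat k"
    by blast
  then have "s \<in> wide_shadow V E VH v"
    by (intro common_point_in_wide_shadow[OF sym]) auto
  then show ?thesis
    by blast
qed

lemma wide_shadow_adjacent:
  assumes "simple_graph V E" "isometric_subgraph VH EH V E" "VH \<noteq> {}" "helly_graph VH EH"
    and "E u v" "y \<in> wide_shadow V E VH u"
  shows "\<exists>s\<in>wide_shadow V E VH v. gdist V E y s \<le> 1"
proof -
  have sym: "symp E" and "u \<in> V" "v \<in> V"
    using assms(1,5) unfolding simple_graph_def symp_def by blast+
  have y: "y \<in> VH" and y_u: "\<And>x. x \<in> VH \<Longrightarrow> gdist V E y x \<le> gdist V E u x"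
    using assms(6) unfolding wide_shadow_def by blast+
  have "y \<in> V"
    using y assms(2) unfolding isometric_subgraph_def subgraph_def by blast
  let ?B = "shadow_balls V E VH v"
  have y_near: "gdist V E x y \<le> enat (k + 1)" if "(x, k) \<in> ?B" for x k
  proof -
    have "gdist V E y x \<le> gdist V E u x"
      using y_u that unfolding shadow_balls_def by blast
    also have "\<dots> \<le> gdist V E u v + gdist V E v x"
      by (rule gdist_triangle)
    also have "\<dots> \<le> 1 + enat k"
      using gdist_edge[of E u v V, OF assms(5) \<open>u \<in> V\<close> \<open>v \<in> V\<close>] that
      unfolding shadow_balls_def by (auto intro: add_mono)
    finally show ?thesis
      by (simp add: gdist_commute[OF sym, of V x y] one_enat_def)
  qed
  have "\<exists>s\<in>VH. \<forall>(x, k)\<in>?B \<union> {(y, 1)}. gdist V E x s \<le> enat k"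
  proof (rule isometric_helly_common_point[OF assms(2-4)])
    show "?B \<union> {(y, 1)} \<subseteq> VH \<times> UNIV"
      using shadow_balls_subset[of V E VH v] y by blast
  next
    fix x k x' l
    assume "(x, k) \<in> ?B \<union> {(y, 1)}" "(x', l) \<in> ?B \<union> {(y, 1)}"
    then consider "(x, k) \<in> ?B" "(x', l) \<in> ?B" | "(x, k) \<in> ?B" "(x', l) = (y, 1)"
      | "(x, k) = (y, 1)" "(x', l) \<in> ?B" | "(x, k) = (y, 1)" "(x', l) = (y, 1)"
      by blast
    then show "gdist V E x x' \<le> enat (k + l)"
    proof cases
      case 1
      then show ?thesis
        by (rule shadow_balls_pairwise[OF sym])
    next
      case 2
      then show ?thesis
        using y_near by simp
    next
      case 3
      then show ?thesis
        using y_near[of x' l] gdist_commute[OF sym, of V y x'] by (simp add: add.commute)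
    next
      case 4
      then show ?thesis
        using gdist_self[OF \<open>y \<in> V\<close>] by simp
    qed
  qed
  then obtain s where "s \<in> VH" "\<forall>(x, k)\<in>?B. gdist V E x s \<le> enat k" "gdist V E y s \<le> enat 1"
    by blast
  moreover from this(1,2) have "s \<in> wide_shadow V E VH v"
    by (auto intro: common_point_in_wide_shadow[OF sym])
  ultimately show ?thesis
    by (metis one_enat_def)
qed

theorem lemma2p3:
  fixes V VH :: "'a set" and E EH :: "'a \<Rightarrow> 'a \<Rightarrow> bool"
  assumes "simple_graph V E" and "connected_graph V E"
    and "isometric_subgraph VH EH V E" and "VH \<noteq> {}"
    and "helly_graph VH EH"
  shows "(\<forall>v\<in>V. wide_shadow V E VH v \<noteq> {}) \<and>
         (\<forall>u v y. E u v \<longrightarrow> y \<in> wide_shadow V E VH u \<longrightarrow>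
            (\<exists>s\<in>wide_shadow V E VH v. gdist V E y s \<le> 1))"
  using wide_shadow_nonempty[OF assms(1,3-5)] wide_shadow_adjacent[OF assms(1,3-5)] by blast

end
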